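(* Consider the averaged Ćuk converter $$-L_1\dot I_1=(1-u)V_1-V_s,\quad -L_2\dot I_2=uV_1+V_2,\quad C_1\dot V_1=(1-u)I_1+uI_2,\quad C_2\dot V_2=I_2-GV_2,$$ with scalar constants $L_1,L_2,C_1,C_2>0$, $G\ge0$, $V_s\in\mathbb{R}$, extended by $\dot u=\upsilon$. Let $I=(I_1,I_2)$, $V=(V_1,V_2)$, $L=\mathrm{diag}(L_1,L_2)$, $C=\mathrm{diag}(C_1,C_2)$. Then this system is passive with respect to the storage function $S=\tfrac12\dot I^\top L\dot I+\tfrac12\dot V^\top C\dot V$ and the port-variables $\dot u$ and $y=\dot V_1(I_2-I_1)-V_1(\dot I_2-\dot I_1)$, i.e. $\dot S\le\dot u\,y$.
   Context: $I_1,I_2$ are inductor currents, $V_1,V_2$ capacitor voltages, $u\in[0,1]$ the duty cycle (averaged model). *)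

theory Defs
  imports Complex_Main
begin

end

theory Submission
  imports Defs
begin

text \<open>Differentiating the averaged dynamics once more gives an incremental system with the same
  interconnection structure, in which \<open>u'\<close> enters like a control input. The interconnection is
  skew-symmetric, so all cross terms cancel in \<open>S'\<close> and only the port term \<open>u' y\<close> and the
  dissipation \<open>- G (V\<^sub>2')\<^sup>2\<close> remain.\<close>

lemma DERIV_of_scaled_eq:
  fixes c :: real
  assumes "c \<noteq> 0" and "\<And>s. c * g s = h s" and "(h has_real_derivative h') (at t)"
  shows "(g has_real_derivative h' / c) (at t)"
proof -
  have "g = (\<lambda>s. h s / c)"
    using assms(1,2) by (auto simp: fun_eq_iff field_simps)
  then show ?thesis
    using DERIV_cdivide[OF assms(3)] by simp
qed

lemma cuk_incremental_power_balance:
  fixes L1 L2 C1 C2 G I1 I2 V1 u u' I1' I2' V1' V2' I1'' I2'' V1'' V2'' :: real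
  assumes "L1 * I1'' = u' * V1 - (1 - u) * V1'"
    and "L2 * I2'' = - (u' * V1 + u * V1' + V2')"
    and "C1 * V1'' = u' * (I2 - I1) + (1 - u) * I1' + u * I2'"
    and "C2 * V2'' = I2' - G * V2'"
  shows "L1 * I1' * I1'' + L2 * I2' * I2'' + C1 * V1' * V1'' + C2 * V2' * V2''
    = u' * (V1' * (I2 - I1) - V1 * (I2' - I1')) - G * V2'\<^sup>2"
proof -
  have "L1 * I1' * I1'' + L2 * I2' * I2'' + C1 * V1' * V1'' + C2 * V2' * V2''
      = I1' * (L1 * I1'') + I2' * (L2 * I2'') + V1' * (C1 * V1'') + V2' * (C2 * V2'')"
    by (simp add: algebra_simps)
  also have "\<dots> = u' * (V1' * (I2 - I1) - V1 * (I2' - I1')) - G * V2'\<^sup>2"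
    unfolding assms by (simp add: algebra_simps power2_eq_square)
  finally show ?thesis .
qed

lemma cuk_incremental_storage_derivative:
  fixes L1 L2 C1 C2 G Vs t :: real
    and I1 I2 V1 V2 u dI1 dI2 dV1 dV2 du :: "real \<Rightarrow> real"
  assumes nonzero: "L1 \<noteq> 0" "L2 \<noteq> 0" "C1 \<noteq> 0" "C2 \<noteq> 0"
    and dI1: "\<And>t. (I1 has_real_derivative dI1 t) (at t)"
    and dI2: "\<And>t. (I2 has_real_derivative dI2 t) (at t)"
    and dV1: "\<And>t. (V1 has_real_derivative dV1 t) (at t)"
    and dV2: "\<And>t. (V2 has_real_derivative dV2 t) (at t)"
    and du: "\<And>t. (u has_real_derivative du t) (at t)"
    and eq1: "\<And>t. - L1 * dI1 t = (1 - u t) * V1 t - Vs"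
    and eq2: "\<And>t. - L2 * dI2 t = u t * V1 t + V2 t"
    and eq3: "\<And>t. C1 * dV1 t = (1 - u t) * I1 t + u t * I2 t"
    and eq4: "\<And>t. C2 * dV2 t = I2 t - G * V2 t"
  shows "((\<lambda>s. (L1 * (dI1 s)\<^sup>2 + L2 * (dI2 s)\<^sup>2) / 2 + (C1 * (dV1 s)\<^sup>2 + C2 * (dV2 s)\<^sup>2) / 2)
      has_real_derivative
        du t * (dV1 t * (I2 t - I1 t) - V1 t * (dI2 t - dI1 t)) - G * (dV2 t)\<^sup>2) (at t)"
proof -
  define I1'' where "I1'' = (du t * V1 t - (1 - u t) * dV1 t) / L1"
  define I2'' where "I2'' = - (du t * V1 t + u t * dV1 t + dV2 t) / L2"
  define V1'' where "V1'' = (du t * (I2 t - I1 t) + (1 - u t) * dI1 t + u t * dI2 t) / C1"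
  define V2'' where "V2'' = (dI2 t - G * dV2 t) / C2"
  have "(dI1 has_real_derivative I1'') (at t)"
    unfolding I1''_def
    by (rule DERIV_of_scaled_eq[where h = "\<lambda>s. Vs - (1 - u s) * V1 s"],
        use nonzero in simp, use eq1 in \<open>simp add: algebra_simps\<close>,
        auto intro!: derivative_eq_intros du dV1 simp: algebra_simps)
  moreover have "(dI2 has_real_derivative I2'') (at t)"
    unfolding I2''_def
    by (rule DERIV_of_scaled_eq[where h = "\<lambda>s. - (u s * V1 s + V2 s)"],
        use nonzero in simp, metis eq2 minus_minus mult_minus_left,
        auto intro!: derivative_eq_intros du dV1 dV2 simp: algebra_simps)
  moreover have "(dV1 has_real_derivative V1'') (at t)"
    unfolding V1''_def
    by (rule DERIV_of_scaled_eq[where h = "\<lambda>s. (1 - u s) * I1 s + u s * I2 s"],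
        use nonzero in simp, use eq3 in simp,
        auto intro!: derivative_eq_intros du dI1 dI2 simp: algebra_simps)
  moreover have "(dV2 has_real_derivative V2'') (at t)"
    unfolding V2''_def
    by (rule DERIV_of_scaled_eq[where h = "\<lambda>s. I2 s - G * V2 s"],
        use nonzero in simp, use eq4 in simp,
        auto intro!: derivative_eq_intros dI2 dV2)
  ultimately have
    "((\<lambda>s. (L1 * (dI1 s)\<^sup>2 + L2 * (dI2 s)\<^sup>2) / 2 + (C1 * (dV1 s)\<^sup>2 + C2 * (dV2 s)\<^sup>2) / 2)
      has_real_derivative
        L1 * dI1 t * I1'' + L2 * dI2 t * I2'' + C1 * dV1 t * V1'' + C2 * dV2 t * V2'') (at t)"
    by (auto intro!: derivative_eq_intros simp: field_simps)
  moreover have "L1 * dI1 t * I1'' + L2 * dI2 t * I2'' + C1 * dV1 t * V1'' + C2 * dV2 t * V2''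
      = du t * (dV1 t * (I2 t - I1 t) - V1 t * (dI2 t - dI1 t)) - G * (dV2 t)\<^sup>2"
    using nonzero unfolding I1''_def I2''_def V1''_def V2''_def
    by (intro cuk_incremental_power_balance) auto
  ultimately show ?thesis
    by simp
qed

theorem lemma6:
  fixes L1 L2 C1 C2 G Vs :: real
    and I1 I2 V1 V2 u dI1 dI2 dV1 dV2 du :: "real \<Rightarrow> real"
  assumes pos: "L1 > 0" "L2 > 0" "C1 > 0" "C2 > 0" and G: "G \<ge> 0"
    and dI1: "\<And>t. (I1 has_real_derivative dI1 t) (at t)"
    and dI2: "\<And>t. (I2 has_real_derivative dI2 t) (at t)"
    and dV1: "\<And>t. (V1 has_real_derivative dV1 t) (at t)"
    and dV2: "\<And>t. (V2 has_real_derivative dV2 t) (at t)"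
    and du: "\<And>t. (u has_real_derivative du t) (at t)"
    and u01: "\<And>t. 0 \<le> u t \<and> u t \<le> 1"
    and eq1: "\<And>t. - L1 * dI1 t = (1 - u t) * V1 t - Vs"
    and eq2: "\<And>t. - L2 * dI2 t = u t * V1 t + V2 t"
    and eq3: "\<And>t. C1 * dV1 t = (1 - u t) * I1 t + u t * I2 t"
    and eq4: "\<And>t. C2 * dV2 t = I2 t - G * V2 t"
  shows "\<forall>t. \<exists>dS.
     ((\<lambda>s. (L1 * (dI1 s)\<^sup>2 + L2 * (dI2 s)\<^sup>2) / 2 + (C1 * (dV1 s)\<^sup>2 + C2 * (dV2 s)\<^sup>2) / 2)
        has_real_derivative dS) (at t)
     \<and> dS \<le> du t * (dV1 t * (I2 t - I1 t) - V1 t * (dI2 t - dI1 t))"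
proof (intro allI exI conjI)
  have "L1 \<noteq> 0" "L2 \<noteq> 0" "C1 \<noteq> 0" "C2 \<noteq> 0"
    using pos by simp_all
  then show "((\<lambda>s. (L1 * (dI1 s)\<^sup>2 + L2 * (dI2 s)\<^sup>2) / 2 + (C1 * (dV1 s)\<^sup>2 + C2 * (dV2 s)\<^sup>2) / 2)
      has_real_derivative
        du t * (dV1 t * (I2 t - I1 t) - V1 t * (dI2 t - dI1 t)) - G * (dV2 t)\<^sup>2) (at t)" for t
    by (rule cuk_incremental_storage_derivative[OF _ _ _ _ dI1 dI2 dV1 dV2 du eq1 eq2 eq3 eq4])
  show "du t * (dV1 t * (I2 t - I1 t) - V1 t * (dI2 t - dI1 t)) - G * (dV2 t)\<^sup>2
      \<le> du t * (dV1 t * (I2 t - I1 t) - V1 t * (dI2 t - dI1 t))" for t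
    using G by simp
qed

end
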